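(* Let $d\ge3$, $h\ge1$. For each non-leaf vertex $i$ of $\mathcal{T}(d,h)$ choose a child $m_i$ of $i$ and put $J_i:=C_i\setminus\{m_i\}$, where $C_i$ is the set of children of $i$. Define $F(d,h):=\{0\}\cup\bigcup_{q=0}^{(h-2)/2}\bigcup_{i\in S_{2q+1}}J_i$ if $h$ is even, and $F(d,h):=\bigcup_{q=0}^{(h-1)/2}\bigcup_{i\in S_{2q}}J_i$ if $h$ is odd, where $S_k$ is the set of vertices at distance $k$ from the root $0$. Then $G(d,h)$ is generated by $\{\bar{\mathbf{x}}_i : i\in F(d,h)\}$.
   Context: Let $\mathcal{T}(d,h)$ be the rooted tree in which the root $0$ has $d$ children, every vertex at distance $1,\dots,h-1$ from the root has $d-1$ children, and the vertices at distance $h$ are leaves. Let $V$ be its vertex set, $A$ its adjacency matrix, $\Delta := dI-A$, and $\Lambda\subset\mathbb{Z}^V$ the lattice spanned by the rows of $\Delta$. Then $G(d,h):=\mathbb{Z}^V/\Lambda$; $\{\mathbf{x}_i:i\in V\}$ is the standard basis of $\mathbb{Z}^V$ and $\bar{\mathbf{v}}$ denotes the image of $\mathbf{v}$ in $G(d,h)$. *)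

theory Defs
  imports Main
begin

text \<open>Vertices of T(d,h) are encoded as lists of child indices (the path from the root).
  The root 0 is the empty list; the root has children [0],...,[d-1]; a vertex at depth
  1..h-1 has children v@[0],...,v@[d-2]; vertices of length h are leaves.\<close>

definition tree_V :: "nat \<Rightarrow> nat \<Rightarrow> nat list set" where
  "tree_V d h = {xs. length xs \<le> h \<and> (\<forall>k<length xs. xs ! k < (if k = 0 then d else d - 1))}"

definition tree_adj :: "nat \<Rightarrow> nat \<Rightarrow> nat list \<Rightarrow> nat list \<Rightarrow> int" where
  "tree_adj d h u v = (if u \<in> tree_V d h \<and> v \<in> tree_V d h \<and>
       ((\<exists>c. v = u @ [c]) \<or> (\<exists>c. u = v @ [c])) then 1 else 0)"

definition tree_Delta :: "nat \<Rightarrow> nat \<Rightarrow> nat list \<Rightarrow> nat list \<Rightarrow> int" where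
  "tree_Delta d h u v = (if u = v then int d else 0) - tree_adj d h u v"

definition basis_vec :: "nat list \<Rightarrow> nat list \<Rightarrow> int" where
  "basis_vec i = (\<lambda>j. if j = i then 1 else 0)"

definition ZV :: "nat \<Rightarrow> nat \<Rightarrow> (nat list \<Rightarrow> int) set" where
  "ZV d h = {v. \<forall>j. j \<notin> tree_V d h \<longrightarrow> v j = 0}"

definition lattice_Lambda :: "nat \<Rightarrow> nat \<Rightarrow> (nat list \<Rightarrow> int) set" where
  "lattice_Lambda d h = {w. \<exists>a. w = (\<lambda>j. \<Sum>i\<in>tree_V d h. a i * tree_Delta d h i j)}"

definition children :: "nat \<Rightarrow> nat \<Rightarrow> nat list \<Rightarrow> nat list set" where
  "children d h i = {v \<in> tree_V d h. \<exists>c. v = i @ [c]}"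

definition sphere :: "nat \<Rightarrow> nat \<Rightarrow> nat \<Rightarrow> nat list set" where
  "sphere d h k = {v \<in> tree_V d h. length v = k}"

definition Jset :: "nat \<Rightarrow> nat \<Rightarrow> (nat list \<Rightarrow> nat list) \<Rightarrow> nat list \<Rightarrow> nat list set" where
  "Jset d h m i = children d h i - {m i}"

definition Fset :: "nat \<Rightarrow> nat \<Rightarrow> (nat list \<Rightarrow> nat list) \<Rightarrow> nat list set" where
  "Fset d h m = (if even h
     then {[]} \<union> (\<Union>q\<in>{0..(h - 2) div 2}. \<Union>i\<in>sphere d h (2*q+1). Jset d h m i)
     else (\<Union>q\<in>{0..(h - 1) div 2}. \<Union>i\<in>sphere d h (2*q). Jset d h m i))"

text \<open>G(d,h) = Z^V / Lambda is generated by the classes of the x_i, i in S, iff every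
  element of Z^V is an integer combination of the x_i (i in S) modulo Lambda.\<close>
definition generates_G :: "nat \<Rightarrow> nat \<Rightarrow> nat list set \<Rightarrow> bool" where
  "generates_G d h S \<longleftrightarrow> (\<forall>v\<in>ZV d h. \<exists>c. \<exists>w\<in>lattice_Lambda d h.
      v = (\<lambda>j. (\<Sum>i\<in>S. c i * basis_vec i j) + w j))"

end

theory Submission
  imports Defs "HOL-Library.Function_Algebras"
begin

text \<open>The row of \<open>\<Delta>\<close> at a vertex \<open>u\<close> says that in \<open>G(d,h)\<close> the class of \<open>d x\<^sub>u\<close> is the sum of
  the classes of the neighbours of \<open>u\<close>. Call \<open>h - |v|\<close> the codepth of \<open>v\<close>; \<open>F(d,h)\<close> consists
  of the children \<open>c \<noteq> m\<^sub>v\<close> of the vertices \<open>v\<close> of odd codepth, plus the root if \<open>h\<close> is even.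
  For \<open>v\<close> of odd codepth, the row of such a child \<open>c\<close> solves for \<open>x\<^sub>v\<close> in terms of \<open>x\<^sub>c\<close> and
  the grandchildren of \<open>v\<close>, which again have odd codepth: induction upwards from the
  leaves. For \<open>w\<close> of even codepth, either \<open>w \<in> F(d,h)\<close> or \<open>w = m\<^sub>v\<close> for its parent \<open>v\<close>, and then
  the row of \<open>v\<close> solves for \<open>x\<^sub>w\<close> in terms of \<open>v\<close>, its other children and its parent, which
  has even codepth: induction downwards from the root.\<close>

lemma finite_tree_V: "finite (tree_V d h)"
proof (rule finite_subset)
  show "tree_V d h \<subseteq> {xs. set xs \<subseteq> {..<d} \<and> length xs \<le> h}"
    by (force simp: tree_V_def in_set_conv_nth split: if_splits)
qed (rule finite_lists_length_le[OF finite_lessThan])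

lemma snoc_in_tree_V_iff:
  "i @ [c] \<in> tree_V d h \<longleftrightarrow> i \<in> tree_V d h \<and> length i < h \<and> c < (if i = [] then d else d - 1)"
  by (auto simp: tree_V_def nth_append less_Suc_eq all_conj_distrib)

lemma butlast_in_tree_V: "u \<in> tree_V d h \<Longrightarrow> butlast u \<in> tree_V d h"
  by (cases u rule: rev_cases) (auto simp: snoc_in_tree_V_iff)

lemma length_le_height: "u \<in> tree_V d h \<Longrightarrow> length u \<le> h"
  by (simp add: tree_V_def)

lemma children_iff: "v \<in> children d h i \<longleftrightarrow> v \<in> tree_V d h \<and> v \<noteq> [] \<and> butlast v = i"
  unfolding children_def by (cases v rule: rev_cases) auto

lemma length_child: "v \<in> children d h i \<Longrightarrow> length v = Suc (length i)"
  unfolding children_def by auto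

lemma children_subset_tree_V: "children d h i \<subseteq> tree_V d h"
  unfolding children_def by auto

lemma finite_children: "finite (children d h i)"
  using finite_subset[OF children_subset_tree_V finite_tree_V] .

lemma ex_other_child:
  assumes "d \<ge> 3" "i \<in> tree_V d h" "length i < h"
  shows "\<exists>c\<in>children d h i. c \<noteq> w"
proof -
  have "i @ [0] \<in> children d h i" "i @ [1] \<in> children d h i"
    using assms by (auto simp: children_def snoc_in_tree_V_iff)
  then show ?thesis by (metis list.inject same_append_eq zero_neq_one)
qed

lemma tree_adj_eq:
  assumes "u \<in> tree_V d h"
  shows "tree_adj d h u j = (if j \<in> children d h u \<or> (u \<noteq> [] \<and> j = butlast u) then 1 else 0)"
  using assms butlast_in_tree_V[OF assms]
  by (cases u rule: rev_cases) (auto simp: tree_adj_def children_def)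

lemma sum_fun_apply: "(\<Sum>x\<in>A. f x) j = (\<Sum>x\<in>A. f x j)"
  by (induction A rule: infinite_finite_induct) auto

lemma basis_vec_mult: "basis_vec u i * x = (if i = u then x else 0)"
  by (simp add: basis_vec_def)

lemma mult_basis_vec: "x * basis_vec u j = (if j = u then x else 0)"
  by (simp add: basis_vec_def)

lemma sum_basis_vec_apply: "finite A \<Longrightarrow> (\<Sum>i\<in>A. basis_vec i) j = (if j \<in> A then 1 else 0)"
  by (simp add: sum_fun_apply basis_vec_def)

lemma tree_Delta_row:
  assumes "u \<in> tree_V d h"
  shows "tree_Delta d h u = (\<lambda>j. int d * basis_vec u j)
           - (if u = [] then 0 else basis_vec (butlast u)) - (\<Sum>c\<in>children d h u. basis_vec c)"
proof
  fix j
  have "j \<in> children d h u \<Longrightarrow> j \<noteq> u \<and> j \<noteq> butlast u"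
    by (auto dest: length_child)
  moreover have "u \<noteq> [] \<Longrightarrow> butlast u \<noteq> u"
    by (cases u rule: rev_cases) auto
  ultimately show "tree_Delta d h u j = ((\<lambda>j. int d * basis_vec u j)
           - (if u = [] then 0 else basis_vec (butlast u)) - (\<Sum>c\<in>children d h u. basis_vec c)) j"
    unfolding minus_apply sum_basis_vec_apply[OF finite_children]
    by (auto simp: tree_Delta_def tree_adj_eq[OF assms] basis_vec_def)
qed

lemma zero_in_lattice_Lambda: "0 \<in> lattice_Lambda d h"
  unfolding lattice_Lambda_def by (intro CollectI exI[of _ "\<lambda>_. 0"]) (simp add: fun_eq_iff)

lemma lattice_Lambda_add:
  assumes "w1 \<in> lattice_Lambda d h" "w2 \<in> lattice_Lambda d h"
  shows "w1 + w2 \<in> lattice_Lambda d h"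
proof -
  obtain a1 a2 where "w1 = (\<lambda>j. \<Sum>i\<in>tree_V d h. a1 i * tree_Delta d h i j)"
    "w2 = (\<lambda>j. \<Sum>i\<in>tree_V d h. a2 i * tree_Delta d h i j)"
    using assms by (auto simp: lattice_Lambda_def)
  then have "w1 + w2 = (\<lambda>j. \<Sum>i\<in>tree_V d h. (a1 i + a2 i) * tree_Delta d h i j)"
    by (simp add: fun_eq_iff distrib_right sum.distrib)
  then show ?thesis by (auto simp: lattice_Lambda_def)
qed

lemma lattice_Lambda_scale:
  assumes "w \<in> lattice_Lambda d h"
  shows "(\<lambda>j. k * w j) \<in> lattice_Lambda d h"
proof -
  obtain a where "w = (\<lambda>j. \<Sum>i\<in>tree_V d h. a i * tree_Delta d h i j)"
    using assms by (auto simp: lattice_Lambda_def)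
  then have "(\<lambda>j. k * w j) = (\<lambda>j. \<Sum>i\<in>tree_V d h. (k * a i) * tree_Delta d h i j)"
    by (simp add: fun_eq_iff sum_distrib_left mult.assoc)
  then show ?thesis by (auto simp: lattice_Lambda_def)
qed

lemma tree_Delta_in_lattice_Lambda:
  assumes "u \<in> tree_V d h"
  shows "tree_Delta d h u \<in> lattice_Lambda d h"
proof -
  have "tree_Delta d h u = (\<lambda>j. \<Sum>i\<in>tree_V d h. basis_vec u i * tree_Delta d h i j)"
    using assms finite_tree_V by (simp add: fun_eq_iff basis_vec_mult)
  then show ?thesis unfolding lattice_Lambda_def by blast
qed

text \<open>The preimage in \<open>\<int>\<^sup>V\<close> of the subgroup of \<open>G(d,h)\<close> generated by the \<open>x\<^sub>i\<close>, \<open>i \<in> S\<close>.\<close>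

definition span_mod_Lambda :: "nat \<Rightarrow> nat \<Rightarrow> nat list set \<Rightarrow> (nat list \<Rightarrow> int) set" where
  "span_mod_Lambda d h S =
     {v. \<exists>c. \<exists>w\<in>lattice_Lambda d h. v = (\<lambda>j. (\<Sum>i\<in>S. c i * basis_vec i j) + w j)}"

lemma generates_G_iff: "generates_G d h S \<longleftrightarrow> ZV d h \<subseteq> span_mod_Lambda d h S"
  by (auto simp: generates_G_def span_mod_Lambda_def)

lemma span_mod_LambdaI:
  "w \<in> lattice_Lambda d h \<Longrightarrow> (\<lambda>j. (\<Sum>i\<in>S. c i * basis_vec i j) + w j) \<in> span_mod_Lambda d h S"
  unfolding span_mod_Lambda_def by blast

lemma lattice_Lambda_subset_span: "lattice_Lambda d h \<subseteq> span_mod_Lambda d h S"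
  using span_mod_LambdaI[where c = "\<lambda>_. 0"] by fastforce

lemma tree_Delta_in_span: "u \<in> tree_V d h \<Longrightarrow> tree_Delta d h u \<in> span_mod_Lambda d h S"
  using lattice_Lambda_subset_span tree_Delta_in_lattice_Lambda by blast

lemma zero_in_span: "0 \<in> span_mod_Lambda d h S"
  using lattice_Lambda_subset_span zero_in_lattice_Lambda by blast

lemma basis_vec_in_span:
  assumes "finite S" "u \<in> S"
  shows "basis_vec u \<in> span_mod_Lambda d h S"
proof -
  have "basis_vec u = (\<lambda>j. (\<Sum>i\<in>S. basis_vec u i * basis_vec i j) + 0 j)"
    using assms by (simp add: fun_eq_iff basis_vec_mult)
  then show ?thesis using span_mod_LambdaI[OF zero_in_lattice_Lambda] by metis
qed

lemma span_add:
  assumes "v1 \<in> span_mod_Lambda d h S" "v2 \<in> span_mod_Lambda d h S"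
  shows "v1 + v2 \<in> span_mod_Lambda d h S"
proof -
  obtain c1 c2 w1 w2 where w: "w1 \<in> lattice_Lambda d h" "w2 \<in> lattice_Lambda d h"
    and "v1 = (\<lambda>j. (\<Sum>i\<in>S. c1 i * basis_vec i j) + w1 j)"
      "v2 = (\<lambda>j. (\<Sum>i\<in>S. c2 i * basis_vec i j) + w2 j)"
    using assms by (auto simp: span_mod_Lambda_def)
  then have "v1 + v2 = (\<lambda>j. (\<Sum>i\<in>S. (c1 i + c2 i) * basis_vec i j) + (w1 + w2) j)"
    by (simp add: fun_eq_iff distrib_right sum.distrib)
  then show ?thesis using span_mod_LambdaI[OF lattice_Lambda_add[OF w]] by metis
qed

lemma span_scale:
  assumes "v \<in> span_mod_Lambda d h S"
  shows "(\<lambda>j. k * v j) \<in> span_mod_Lambda d h S"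
proof -
  obtain c w where w: "w \<in> lattice_Lambda d h"
    and "v = (\<lambda>j. (\<Sum>i\<in>S. c i * basis_vec i j) + w j)"
    using assms by (auto simp: span_mod_Lambda_def)
  then have "(\<lambda>j. k * v j) = (\<lambda>j. (\<Sum>i\<in>S. (k * c i) * basis_vec i j) + k * w j)"
    by (simp add: fun_eq_iff distrib_left sum_distrib_left mult.assoc)
  then show ?thesis using span_mod_LambdaI[OF lattice_Lambda_scale[OF w]] by metis
qed

lemma span_diff:
  assumes "v1 \<in> span_mod_Lambda d h S" "v2 \<in> span_mod_Lambda d h S"
  shows "v1 - v2 \<in> span_mod_Lambda d h S"
proof -
  have "v1 - v2 = v1 + (\<lambda>j. (-1) * v2 j)"
    by (simp add: fun_eq_iff)
  then show ?thesis using span_add[OF assms(1) span_scale[OF assms(2)]] by metis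
qed

lemma span_sum:
  "(\<And>x. x \<in> A \<Longrightarrow> f x \<in> span_mod_Lambda d h S) \<Longrightarrow> sum f A \<in> span_mod_Lambda d h S"
  by (induction A rule: infinite_finite_induct) (auto intro: span_add zero_in_span)

lemma ZV_subset_span:
  assumes "\<And>u. u \<in> tree_V d h \<Longrightarrow> basis_vec u \<in> span_mod_Lambda d h S"
  shows "ZV d h \<subseteq> span_mod_Lambda d h S"
proof
  fix v assume "v \<in> ZV d h"
  then have "v = (\<Sum>u\<in>tree_V d h. (\<lambda>j. v u * basis_vec u j))"
    by (auto simp: fun_eq_iff sum_fun_apply mult_basis_vec finite_tree_V ZV_def)
  also have "\<dots> \<in> span_mod_Lambda d h S"
    by (intro span_sum span_scale assms)
  finally show "v \<in> span_mod_Lambda d h S" .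
qed

lemma Fset_subset_tree_V: "Fset d h m \<subseteq> tree_V d h"
proof -
  have "[] \<in> tree_V d h"
    by (simp add: tree_V_def)
  then show ?thesis using children_subset_tree_V by (auto simp: Fset_def Jset_def)
qed

lemma finite_Fset: "finite (Fset d h m)"
  using finite_subset[OF Fset_subset_tree_V finite_tree_V] .

lemma root_in_Fset: "even h \<Longrightarrow> [] \<in> Fset d h m"
  by (simp add: Fset_def)

lemma child_in_Fset:
  assumes "v \<in> tree_V d h" "length v < h" "odd (h - length v)"
    and "w \<in> children d h v" "w \<noteq> m v"
  shows "w \<in> Fset d h m"
proof -
  have J: "w \<in> Jset d h m v"
    using assms(4,5) by (simp add: Jset_def)
  define q where "q = length v div 2"
  show ?thesis
  proof (cases "even h")
    case True
    then have "length v = 2*q+1" "q \<le> (h - 2) div 2"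
      using assms(2,3) unfolding q_def by presburger+
    then show ?thesis using True J assms(1) by (auto simp: Fset_def sphere_def)
  next
    case False
    then have "length v = 2*q" "q \<le> (h - 1) div 2"
      using assms(2,3) unfolding q_def by presburger+
    then show ?thesis using False J assms(1) by (auto simp: Fset_def sphere_def)
  qed
qed

context
  fixes d h :: nat and m :: "nat list \<Rightarrow> nat list" and S :: "nat list set"
  assumes d_ge_3: "d \<ge> 3"
    and finite_S: "finite S"
    and other_children_in_S: "\<And>v w. v \<in> tree_V d h \<Longrightarrow> length v < h \<Longrightarrow> odd (h - length v)
      \<Longrightarrow> w \<in> children d h v \<Longrightarrow> w \<noteq> m v \<Longrightarrow> w \<in> S"
    and root_in_S: "even h \<Longrightarrow> [] \<in> S"
begin

lemma basis_vec_in_span_odd_codepth: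
  "v \<in> tree_V d h \<Longrightarrow> length v < h \<Longrightarrow> odd (h - length v)
    \<Longrightarrow> basis_vec v \<in> span_mod_Lambda d h S"
proof (induction "h - length v" arbitrary: v rule: less_induct)
  case less
  obtain c where c: "c \<in> children d h v" "c \<noteq> m v"
    using ex_other_child[OF d_ge_3 less.prems(1,2)] by blast
  have c_in_S: "c \<in> S"
    using other_children_in_S[OF less.prems c] .
  have c_row: "tree_Delta d h c = (\<lambda>j. int d * basis_vec c j) - basis_vec v
      - (\<Sum>g\<in>children d h c. basis_vec g)"
    using tree_Delta_row[of c] c(1) by (simp add: children_iff)
  have "basis_vec g \<in> span_mod_Lambda d h S" if g: "g \<in> children d h c" for g
  proof -
    have "length g = length v + 2"
      using c(1) g by (simp add: length_child)
    moreover have "length g \<le> h"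
      using g children_subset_tree_V length_le_height by blast
    ultimately have "length g < h" "odd (h - length g)" "h - length g < h - length v"
      using less.prems(3) by presburger+
    then show ?thesis using less.hyps g children_subset_tree_V by blast
  qed
  then have grandchildren: "(\<Sum>g\<in>children d h c. basis_vec g) \<in> span_mod_Lambda d h S"
    by (rule span_sum)
  have "(\<lambda>j. int d * basis_vec c j) - (\<Sum>g\<in>children d h c. basis_vec g) - tree_Delta d h c
      \<in> span_mod_Lambda d h S"
    using c(1) children_subset_tree_V
    by (intro span_diff span_scale grandchildren basis_vec_in_span[OF finite_S c_in_S]
        tree_Delta_in_span) blast
  then show ?case unfolding c_row by (simp add: algebra_simps)
qed

lemma basis_vec_in_span_even_codepth:
  "w \<in> tree_V d h \<Longrightarrow> even (h - length w) \<Longrightarrow> basis_vec w \<in> span_mod_Lambda d h S"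
proof (induction "length w" arbitrary: w rule: less_induct)
  case less
  show ?case
  proof (cases "w = []")
    case True
    then show ?thesis
      using less.prems(2) basis_vec_in_span[OF finite_S root_in_S] by simp
  next
    case False
    define v where "v = butlast w"
    have w_child: "w \<in> children d h v"
      using less.prems(1) False by (simp add: children_iff v_def)
    have v_in: "v \<in> tree_V d h"
      using butlast_in_tree_V[OF less.prems(1)] by (simp add: v_def)
    have v_odd: "length v < h" "odd (h - length v)"
      using length_child[OF w_child] length_le_height[OF less.prems(1)] less.prems(2)
      by presburger+
    have sibling: "basis_vec c \<in> span_mod_Lambda d h S" if "c \<in> children d h v" "c \<noteq> m v" for c
      using basis_vec_in_span[OF finite_S other_children_in_S[OF v_in v_odd that]] .
    show ?thesis
    proof (cases "w = m v")
      case False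
      then show ?thesis using sibling w_child by blast
    next
      case True
      let ?parent = "if v = [] then 0 else basis_vec (butlast v)"
      have parent: "?parent \<in> span_mod_Lambda d h S"
      proof (cases "v = []")
        case False
        then have "length (butlast v) < length w" "even (h - length (butlast v))"
          using length_child[OF w_child] v_odd by (cases v rule: rev_cases; simp; presburger)+
        then show ?thesis
          using less.hyps butlast_in_tree_V[OF v_in] False by simp
      qed (simp add: zero_in_span)
      have "(\<Sum>c\<in>children d h v. basis_vec c) = basis_vec w + (\<Sum>c\<in>children d h v - {w}. basis_vec c)"
        using sum.remove[OF finite_children w_child] .
      then have "basis_vec w = (\<lambda>j. int d * basis_vec v j) - ?parent
          - (\<Sum>c\<in>children d h v - {w}. basis_vec c) - tree_Delta d h v"
        unfolding tree_Delta_row[OF v_in] by (simp add: algebra_simps)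
      also have "\<dots> \<in> span_mod_Lambda d h S"
        using True sibling
        by (intro span_diff span_scale span_sum parent tree_Delta_in_span[OF v_in]
            basis_vec_in_span_odd_codepth[OF v_in v_odd]) auto
      finally show ?thesis .
    qed
  qed
qed

lemma generates_G_if_other_children:
  "generates_G d h S"
  unfolding generates_G_iff
proof (rule ZV_subset_span)
  fix u assume u: "u \<in> tree_V d h"
  show "basis_vec u \<in> span_mod_Lambda d h S"
  proof (cases "even (h - length u)")
    case True
    then show ?thesis using basis_vec_in_span_even_codepth[OF u] by blast
  next
    case False
    moreover from this have "length u < h"
      using length_le_height[OF u] by (cases "length u = h") auto
    ultimately show ?thesis using basis_vec_in_span_odd_codepth[OF u] by blast
  qed
qed

end

theorem lemma6p4:
  fixes d h :: nat and m :: "nat list \<Rightarrow> nat list"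
  assumes "d \<ge> 3" and "h \<ge> 1"
    and "\<And>i. i \<in> tree_V d h \<Longrightarrow> length i < h \<Longrightarrow> m i \<in> children d h i"
  shows "generates_G d h (Fset d h m)"
  using generates_G_if_other_children[OF assms(1) finite_Fset child_in_Fset root_in_Fset] .

end
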